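(* Let $L>0$. Then (i) $\Psi_2(x;L)\le \exp(x^2)-1$ for all $x\ge 0$; and (ii) $\Psi_2(x;L)\ge \Psi_1(x;L/3)$ for all $x\ge 0$.
   Context: For $x\ge 0$ let $h_1(x)=1+x-\sqrt{1+2x}$ and $h_2(x)=(1+x)\log(1+x)-x$. For $L>0$ define $\Psi_1(x;L)=\exp\big(\frac{2}{L^2}h_1(Lx)\big)-1$ (the Bernstein–Orlicz function) and $\Psi_2(x;L)=\exp\big(\frac{2}{L^2}h_2(Lx)\big)-1$ (the Bennett–Orlicz function), $x\ge 0$. *)

theory Defs
  imports Complex_Main
begin

definition h1 :: "real \<Rightarrow> real" where
  "h1 x = 1 + x - sqrt (1 + 2 * x)"

definition h2 :: "real \<Rightarrow> real" where
  "h2 x = (1 + x) * ln (1 + x) - x"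

definition Psi1 :: "real \<Rightarrow> real \<Rightarrow> real" where
  "Psi1 x L = exp ((2 / L^2) * h1 (L * x)) - 1"

definition Psi2 :: "real \<Rightarrow> real \<Rightarrow> real" where
  "Psi2 x L = exp ((2 / L^2) * h2 (L * x)) - 1"

end

theory Submission
  imports Defs
begin

text \<open>Both inequalities reduce to pointwise comparisons of the exponents, i.e.\ to
  \<open>2 h\<^sub>2(y) \<le> y\<^sup>2\<close> and \<open>9 h\<^sub>1(y/3) \<le> h\<^sub>2(y)\<close> for \<open>y \<ge> 0\<close> (substitute \<open>y = L x\<close>).
  Each difference vanishes at \<open>0\<close> and is nondecreasing. For the first the derivative is
  \<open>y - ln (1 + y) \<ge> 0\<close>. For the second the derivative \<open>ln (1 + y) - 3 + 3 / sqrt (1 + 2y/3)\<close>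
  itself vanishes at \<open>0\<close>, and its derivative \<open>1/(1 + y) - (1 + 2y/3) powr (-3/2)\<close> is nonnegative
  because \<open>(1 + 2y/3)\<^sup>3 \<ge> (1 + y)\<^sup>2\<close>.\<close>

lemma nonneg_if_deriv_nonneg_from_zero:
  fixes f f' :: "real \<Rightarrow> real"
  assumes "f 0 = 0"
    and "\<And>t. t \<ge> 0 \<Longrightarrow> (f has_real_derivative f' t) (at t)"
    and "\<And>t. t \<ge> 0 \<Longrightarrow> f' t \<ge> 0"
    and "y \<ge> 0"
  shows "f y \<ge> 0"
proof -
  have "f 0 \<le> f y"
    using assms(2,3) by (intro DERIV_nonneg_imp_nondecreasing[OF \<open>y \<ge> 0\<close>]) auto
  with \<open>f 0 = 0\<close> show ?thesis by simp
qed

lemma h2_has_real_derivative: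
  "t > -1 \<Longrightarrow> (h2 has_real_derivative ln (1 + t)) (at t)"
  unfolding h2_def[abs_def]
  by (rule derivative_eq_intros refl | simp)+

lemma h1_has_real_derivative:
  "t > -1/2 \<Longrightarrow> (h1 has_real_derivative 1 - 1 / sqrt (1 + 2 * t)) (at t)"
  unfolding h1_def[abs_def]
  by (auto intro!: derivative_eq_intros simp: divide_simps)

lemma h2_le_half_square:
  fixes y :: real
  assumes "y \<ge> 0"
  shows "h2 y \<le> y\<^sup>2 / 2"
proof -
  have "0 \<le> y\<^sup>2 / 2 - h2 y"
  proof (rule nonneg_if_deriv_nonneg_from_zero[OF _ _ _ assms])
    fix t :: real assume "t \<ge> 0"
    then show "((\<lambda>y. y\<^sup>2 / 2 - h2 y) has_real_derivative t - ln (1 + t)) (at t)"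
      by (auto intro!: derivative_eq_intros h2_has_real_derivative)
    show "t - ln (1 + t) \<ge> 0"
      using ln_add_one_self_le_self[of t] \<open>t \<ge> 0\<close> by simp
  qed (simp add: h2_def)
  then show ?thesis by simp
qed

lemma one_plus_le_sqrt_cube:
  fixes y :: real
  assumes "y \<ge> 0"
  shows "1 + y \<le> sqrt (1 + 2 * y / 3) ^ 3"
proof (rule power2_le_imp_le)
  have "(1 + y)\<^sup>2 \<le> (1 + 2 * y / 3) ^ 3"
    using assms by (simp add: power2_eq_square power3_eq_cube field_simps)
  also have "\<dots> = ((sqrt (1 + 2 * y / 3))\<^sup>2) ^ 3"
    using assms by simp
  also have "\<dots> = (sqrt (1 + 2 * y / 3) ^ 3)\<^sup>2"
    by (simp flip: power_mult add: mult.commute)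
  finally show "(1 + y)\<^sup>2 \<le> (sqrt (1 + 2 * y / 3) ^ 3)\<^sup>2" .
qed (use assms in simp)

lemma h1_third_le_h2:
  fixes y :: real
  assumes "y \<ge> 0"
  shows "9 * h1 (y / 3) \<le> h2 y"
proof -
  define g' :: "real \<Rightarrow> real" where "g' t = ln (1 + t) - 3 + 3 / sqrt (1 + 2 * t / 3)" for t
  have g'_deriv: "\<And>s. s \<ge> 0 \<Longrightarrow>
      (g' has_real_derivative 1 / (1 + s) - 1 / sqrt (1 + 2 * s / 3) ^ 3) (at s)"
    unfolding g'_def[abs_def]
    by (rule derivative_eq_intros refl | simp)+
       (simp add: power3_eq_cube inverse_eq_divide mult.commute)
  have g'_nonneg: "g' t \<ge> 0" if "t \<ge> 0" for t
  proof (rule nonneg_if_deriv_nonneg_from_zero[OF _ g'_deriv _ that])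
    fix s :: real assume "s \<ge> 0"
    have "1 / sqrt (1 + 2 * s / 3) ^ 3 \<le> 1 / (1 + s)"
      using one_plus_le_sqrt_cube[OF \<open>s \<ge> 0\<close>] \<open>s \<ge> 0\<close> by (intro divide_left_mono) auto
    then show "1 / (1 + s) - 1 / sqrt (1 + 2 * s / 3) ^ 3 \<ge> 0" by simp
  qed (simp_all add: g'_def)
  have "0 \<le> h2 y - 9 * h1 (y / 3)"
  proof (rule nonneg_if_deriv_nonneg_from_zero[OF _ _ g'_nonneg assms])
    fix t :: real assume "t \<ge> 0"
    have "((\<lambda>y. h1 (y / 3)) has_real_derivative (1 - 1 / sqrt (1 + 2 * (t / 3))) * (1 / 3)) (at t)"
      using \<open>t \<ge> 0\<close>
      by (intro DERIV_chain2[OF h1_has_real_derivative]) (auto intro!: derivative_eq_intros)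
    with \<open>t \<ge> 0\<close> show "((\<lambda>y. h2 y - 9 * h1 (y / 3)) has_real_derivative g' t) (at t)"
      by (auto intro!: derivative_eq_intros h2_has_real_derivative simp: g'_def algebra_simps)
  qed (simp add: h1_def h2_def)
  then show ?thesis by simp
qed

lemma Psi2_le_exp_square:
  assumes "L > 0" "x \<ge> 0"
  shows "Psi2 x L \<le> exp (x\<^sup>2) - 1"
proof -
  have "(2 / L\<^sup>2) * h2 (L * x) \<le> (2 / L\<^sup>2) * ((L * x)\<^sup>2 / 2)"
    using h2_le_half_square[of "L * x"] assms by (intro mult_left_mono) auto
  also have "\<dots> = x\<^sup>2"
    using assms by (simp add: power_mult_distrib)
  finally show ?thesis by (simp add: Psi2_def)
qed

lemma Psi1_third_le_Psi2:
  assumes "L > 0" "x \<ge> 0"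
  shows "Psi1 x (L / 3) \<le> Psi2 x L"
proof -
  have "(2 / (L / 3)\<^sup>2) * h1 (L / 3 * x) = (2 / L\<^sup>2) * (9 * h1 (L * x / 3))"
    by (simp add: power_divide)
  also have "\<dots> \<le> (2 / L\<^sup>2) * h2 (L * x)"
    using h1_third_le_h2[of "L * x"] assms by (intro mult_left_mono) auto
  finally show ?thesis by (simp add: Psi1_def Psi2_def)
qed

theorem proposition3:
  fixes L :: real
  assumes "L > 0"
  shows "(\<forall>x::real. x \<ge> 0 \<longrightarrow> Psi2 x L \<le> exp (x^2) - 1) \<and>
         (\<forall>x::real. x \<ge> 0 \<longrightarrow> Psi2 x L \<ge> Psi1 x (L / 3))"
  using Psi2_le_exp_square Psi1_third_le_Psi2 assms by blast

end
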